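(* Let $V,W$ be finite-dimensional real vector spaces, $(S,t)$ a pointed topological space, and $\mathcal{U}\subset V\times S$ an open neighbourhood of $(0,t)$. Let $f:\mathcal{U}\to W$, $(q,s)\mapsto f_s(q)$, be such that $F:\mathcal{U}\to W\times S$, $F(q,s)=(f_s(q),s)$, is rel-$C^1$, with $f_t(0)=0$ and $df_t(0):V\to W$ an isomorphism. Then there exist open neighbourhoods $U\subset\mathcal{U}$ and $U'\subset W\times S$ of $(0,t)$ such that $F$ restricts to a bijection $U\to U'$ whose inverse $G$ is also rel-$C^1$. Moreover, if $2\le r\le\infty$ and $F$ is rel-$C^r$, then so is $G$.
   Context: For an open $\mathcal{U}\subset V\times S$, a map $\mathcal U\to W\times S$ of the form $(q,s)\mapsto(h(q,s),s)$ is rel-$C^0$ if continuous; rel-$C^r$ for $r\ge1$ if it is continuous, $q\mapsto h(q,s)$ is differentiable for each $s$, and $(q,v,s)\mapsto(h(q,s),D_qh(q,s)v,s)$ (on the corresponding open subset of $(V\times V)\times S$) is rel-$C^{r-1}$; rel-$C^\infty$ if rel-$C^r$ for all $r$. *)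

theory Defs
  imports "HOL-Analysis.Analysis" "HOL-Library.Extended_Nat"
begin

text \<open>Iterated directional Frechet derivative:
  dirD g [] = g,  dirD g (v # vs) q = D (dirD g vs) (q) v,
  i.e. dirD g [v_k,...,v_1] q = D^k g(q)(v_1,...,v_k).\<close>
fun dirD :: "('v::real_normed_vector \<Rightarrow> 'w::real_normed_vector) \<Rightarrow> 'v list \<Rightarrow> 'v \<Rightarrow> 'w" where
  "dirD g [] = g"
| "dirD g (v # vs) = (\<lambda>q. frechet_derivative (dirD g vs) (at q) v)"

definition relC :: "enat \<Rightarrow> (('v::euclidean_space) \<times> ('s::topological_space)) set
                     \<Rightarrow> ('v \<Rightarrow> 's \<Rightarrow> 'w::euclidean_space) \<Rightarrow> bool" where
  "relC r U h \<longleftrightarrow>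
     (\<forall>k::nat. enat k < r \<longrightarrow> (\<forall>vs. length vs = k \<longrightarrow>
        (\<forall>q s. (q, s) \<in> U \<longrightarrow> dirD (\<lambda>x. h x s) vs differentiable (at q)))) \<and>
     (\<forall>k::nat. enat k \<le> r \<longrightarrow> (\<forall>vs. length vs = k \<longrightarrow>
        continuous_on U (\<lambda>(q, s). dirD (\<lambda>x. h x s) vs q)))"

end

theory Submission
  imports Defs
begin

(* For a fixed parameter this is the inverse function theorem; the point is uniformity in s.
   Let A = df_t(0) and choose K with |A^-1 z| <= K |z|.  On a product B(0, delta) x N on which
   every df_s(q) is within 1/(2K) of A, the Newton maps q |-> q - A^-1 (f_s(q) - w) are
   1/2-contractions of small closed balls, uniformly in (w, s).  Banach's fixed point theorem
   then makes F injective there with open image, and its inverse g jointly continuous.  For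
   fixed s the classical argument gives D_w g(w, s) = (D_q f(g(w, s), s))^-1.  Inverting a
   continuously varying invertible linear map preserves rel-C^n regularity, and rel-C^n maps
   are closed under sums, bilinear products and composition; so if f is rel-C^(n+1) and g is
   rel-C^n, the formula for D_w g shows that g is rel-C^(n+1), and induction on n finishes. *)

section \<open>Linear maps, derivatives and slices of product sets\<close>

lemma linear_euclidean_representation:
  fixes M :: "'v::euclidean_space \<Rightarrow> 'w::real_vector"
  assumes "linear M"
  shows "M y = (\<Sum>b\<in>Basis. (y \<bullet> b) *\<^sub>R M b)"
proof -
  have "M y = M (\<Sum>b\<in>Basis. (y \<bullet> b) *\<^sub>R b)" by (simp only: euclidean_representation)
  also have "\<dots> = (\<Sum>b\<in>Basis. (y \<bullet> b) *\<^sub>R M b)"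
    by (simp only: linear_sum[OF assms] linear_scale[OF assms])
  finally show ?thesis .
qed

lemma norm_linear_le_sum_Basis:
  fixes M :: "'v::euclidean_space \<Rightarrow> 'w::real_normed_vector"
  assumes "linear M"
  shows "norm (M y) \<le> (\<Sum>b\<in>Basis. norm (M b)) * norm y"
proof -
  have "norm (M y) \<le> (\<Sum>b\<in>Basis. norm ((y \<bullet> b) *\<^sub>R M b))"
    unfolding linear_euclidean_representation[OF assms, of y] by (rule norm_sum)
  also have "\<dots> \<le> (\<Sum>b\<in>Basis. norm y * norm (M b))"
    by (intro sum_mono) (simp add: Basis_le_norm mult_right_mono)
  finally show ?thesis
    by (simp add: sum_distrib_left mult.commute)
qed

lemma linear_inv:
  assumes f: "linear f" and "bij f"
  shows "linear (inv f)"
proof (rule linearI)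
  have f_inv: "f (inv f y) = y" and inv_f: "inv f (f x) = x" for x y
    using \<open>bij f\<close> by (simp_all add: bij_is_inj bij_is_surj surj_f_inv_f)
  show "inv f (x + y) = inv f x + inv f y" for x y
    by (metis f_inv inv_f linear_add[OF f])
  show "inv f (c *\<^sub>R x) = c *\<^sub>R inv f x" for c x
    by (metis f_inv inv_f linear_scale[OF f])
qed

lemma frechet_derivative_apply: "(f has_derivative D) (at x) \<Longrightarrow> frechet_derivative f (at x) v = D v"
  by (metis frechet_derivative_at)

lemma linear_frechet_derivative: "f differentiable (at x) \<Longrightarrow> linear (frechet_derivative f (at x))"
  unfolding frechet_derivative_works by (rule has_derivative_linear)

lemma frechet_derivative_cong_open:
  assumes "open T" "x \<in> T" "\<And>y. y \<in> T \<Longrightarrow> f y = g y"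
  shows "frechet_derivative f (at x) = frechet_derivative g (at x)"
    and "f differentiable (at x) \<longleftrightarrow> g differentiable (at x)"
proof -
  have "(f has_derivative D) (at x) \<longleftrightarrow> (g has_derivative D) (at x)" for D
    using has_derivative_transform_within_open[OF _ assms(1,2)] assms(3) by metis
  then show "frechet_derivative f (at x) = frechet_derivative g (at x)"
    and "f differentiable (at x) \<longleftrightarrow> g differentiable (at x)"
    unfolding frechet_derivative_def differentiable_def by simp_all
qed

lemma open_slice: "open U \<Longrightarrow> open {q. (q, s) \<in> U}"
  using open_vimage[of U "\<lambda>q. (q, s)"] by (simp add: vimage_def continuous_on_Pair)

lemma continuous_at_slice:
  assumes "continuous_on U (\<lambda>(q, s). h q s)" "open U" "(q, s) \<in> U"
  shows "continuous (at q) (\<lambda>x. h x s)"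
proof -
  have "continuous_on {x. (x, s) \<in> U} (\<lambda>x. (x, s))"
    by (intro continuous_intros)
  from continuous_on_compose2[OF assms(1) this] have "continuous_on {x. (x, s) \<in> U} (\<lambda>x. h x s)"
    by auto
  then show ?thesis
    using assms(3) continuous_on_eq_continuous_at[OF open_slice[OF assms(2)]] by blast
qed

lemma eventually_dist_slice:
  fixes h :: "'a::topological_space \<Rightarrow> 'b::topological_space \<Rightarrow> 'c::metric_space"
  assumes "continuous_on U (\<lambda>(q, s). h q s)" "open U" "(q0, s0) \<in> U" "r > 0"
  shows "\<forall>\<^sub>F s in nhds s0. (q0, s) \<in> U \<and> dist (h q0 s) (h q0 s0) < r"
proof -
  have "((\<lambda>(q, s). h q s) \<longlongrightarrow> h q0 s0) (at (q0, s0) within U)"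
    using assms(1,3) unfolding continuous_on_def by fastforce
  then have "\<forall>\<^sub>F p in at (q0, s0) within U. dist ((\<lambda>(q, s). h q s) p) (h q0 s0) < r"
    using assms(4) by (simp add: tendsto_iff)
  moreover have "\<forall>\<^sub>F p in nhds (q0, s0). p \<in> U"
    using eventually_nhds_in_open[OF assms(2,3)] .
  ultimately have "\<forall>\<^sub>F (q, s) in nhds q0 \<times>\<^sub>F nhds s0. (q, s) \<in> U \<and> dist (h q s) (h q0 s0) < r"
    unfolding eventually_at_filter nhds_prod[symmetric] by eventually_elim (use assms(4) in auto)
  then obtain Pq Ps where Pq: "\<forall>\<^sub>F q in nhds q0. Pq q" and Ps: "\<forall>\<^sub>F s in nhds s0. Ps s"
    and P: "\<And>q s. Pq q \<Longrightarrow> Ps s \<Longrightarrow> (q, s) \<in> U \<and> dist (h q s) (h q0 s0) < r"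
    unfolding eventually_prod_filter by auto
  from Ps show ?thesis
    by (rule eventually_mono) (rule P[OF eventually_nhds_x_imp_x[OF Pq]])
qed

section \<open>The calculus of rel-C^r maps\<close>

lemma dirD_snoc: "dirD g (vs @ [v]) = dirD (\<lambda>q. frechet_derivative g (at q) v) vs"
  by (induction vs) auto

lemma relC_enat_iff:
  "relC (enat n) U h \<longleftrightarrow>
     (\<forall>vs. length vs < n \<longrightarrow> (\<forall>q s. (q, s) \<in> U \<longrightarrow> dirD (\<lambda>x. h x s) vs differentiable (at q))) \<and>
     (\<forall>vs. length vs \<le> n \<longrightarrow> continuous_on U (\<lambda>(q, s). dirD (\<lambda>x. h x s) vs q))"
  unfolding relC_def by auto

lemma all_lists_length_less_Suc:
  "(\<forall>vs. length vs < Suc n \<longrightarrow> P vs) \<longleftrightarrow> P [] \<and> (\<forall>ws v. length ws < n \<longrightarrow> P (ws @ [v]))"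
  by (auto, metis rev_exhaust length_append_singleton not_less_eq)

lemma all_lists_length_le_Suc:
  "(\<forall>vs. length vs \<le> Suc n \<longrightarrow> P vs) \<longleftrightarrow> P [] \<and> (\<forall>ws v. length ws \<le> n \<longrightarrow> P (ws @ [v]))"
  by (auto, metis rev_exhaust length_append_singleton not_less_eq_eq)

lemma relC_0_iff: "relC (enat 0) U h \<longleftrightarrow> continuous_on U (\<lambda>(q, s). h q s)"
  unfolding relC_def by auto

lemma relC_Suc_iff:
  "relC (enat (Suc n)) U h \<longleftrightarrow>
     continuous_on U (\<lambda>(q, s). h q s) \<and>
     (\<forall>q s. (q, s) \<in> U \<longrightarrow> (\<lambda>x. h x s) differentiable (at q)) \<and>
     (\<forall>v. relC (enat n) U (\<lambda>q s. frechet_derivative (\<lambda>x. h x s) (at q) v))"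
  unfolding relC_enat_iff all_lists_length_less_Suc all_lists_length_le_Suc
  by (auto simp: dirD_snoc)

lemma relC_mono: "relC r U h \<Longrightarrow> r' \<le> r \<Longrightarrow> relC r' U h"
  unfolding relC_def by (intro conjI allI impI) (metis order_less_le_trans, metis order_trans)

lemma relC_SucD: "relC (enat (Suc n)) U h \<Longrightarrow> relC (enat n) U h"
  by (erule relC_mono) simp

lemma relC_iff_relC_enat: "relC r U h \<longleftrightarrow> (\<forall>n. enat n \<le> r \<longrightarrow> relC (enat n) U h)"
proof
  assume "\<forall>n. enat n \<le> r \<longrightarrow> relC (enat n) U h"
  then show "relC r U h"
    unfolding relC_def by (metis Suc_ile_eq order.refl)
qed (auto intro: relC_mono)

lemma relC_subset: "relC r U h \<Longrightarrow> V \<subseteq> U \<Longrightarrow> relC r V h"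
  unfolding relC_def by (blast intro: continuous_on_subset)

lemma dirD_cong_open:
  assumes "open T" "\<And>y. y \<in> T \<Longrightarrow> f y = g y" "y \<in> T"
  shows "dirD f vs y = dirD g vs y"
  using assms(3)
proof (induction vs arbitrary: y)
  case (Cons v vs)
  then show ?case
    using frechet_derivative_cong_open(1)[OF assms(1) Cons.prems, of "dirD f vs" "dirD g vs"] by simp
qed (use assms in simp)

lemma relC_cong:
  assumes U: "open U" and eq: "\<And>q s. (q, s) \<in> U \<Longrightarrow> h q s = h' q s" and h: "relC r U h"
  shows "relC r U h'"
proof -
  have dirD_eq: "dirD (\<lambda>x. h x s) vs q = dirD (\<lambda>x. h' x s) vs q" if "(q, s) \<in> U" for vs q s
    by (rule dirD_cong_open[OF open_slice[OF U]]) (use eq that in auto)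
  have differentiable_iff:
      "dirD (\<lambda>x. h x s) vs differentiable (at q) \<longleftrightarrow> dirD (\<lambda>x. h' x s) vs differentiable (at q)"
    if "(q, s) \<in> U" for vs q s
    by (rule frechet_derivative_cong_open(2)[OF open_slice[OF U]]) (use dirD_eq that in auto)
  have continuous_on_iff: "continuous_on U (\<lambda>(q, s). dirD (\<lambda>x. h x s) vs q) \<longleftrightarrow>
      continuous_on U (\<lambda>(q, s). dirD (\<lambda>x. h' x s) vs q)" for vs
    by (rule continuous_on_cong) (auto simp: dirD_eq)
  show ?thesis
    using h unfolding relC_def by (simp add: differentiable_iff continuous_on_iff)
qed

lemma relC_const: "relC (enat n) U (\<lambda>q s. c)"
  by (induction n arbitrary: c) (simp_all add: relC_0_iff relC_Suc_iff)

lemma relC_add: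
  assumes U: "open U"
  shows "relC (enat n) U h1 \<Longrightarrow> relC (enat n) U h2 \<Longrightarrow> relC (enat n) U (\<lambda>q s. h1 q s + h2 q s)"
proof (induction n arbitrary: h1 h2)
  case 0
  then show ?case by (simp add: relC_0_iff case_prod_unfold continuous_on_add)
next
  case (Suc n)
  then have D1: "\<And>q s. (q, s) \<in> U \<Longrightarrow>
      ((\<lambda>x. h1 x s) has_derivative frechet_derivative (\<lambda>x. h1 x s) (at q)) (at q)"
    and D2: "\<And>q s. (q, s) \<in> U \<Longrightarrow>
      ((\<lambda>x. h2 x s) has_derivative frechet_derivative (\<lambda>x. h2 x s) (at q)) (at q)"
    by (simp_all add: relC_Suc_iff frechet_derivative_works)
  have "frechet_derivative (\<lambda>x. h1 x s + h2 x s) (at q) v =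
      frechet_derivative (\<lambda>x. h1 x s) (at q) v + frechet_derivative (\<lambda>x. h2 x s) (at q) v"
    if "(q, s) \<in> U" for q s v
    using frechet_derivative_apply[OF has_derivative_add[OF D1 D2, OF that that]] .
  with Suc show ?case
    unfolding relC_Suc_iff
    by (auto simp: case_prod_unfold continuous_on_add intro: relC_cong[OF U] Suc.IH)
qed

lemma relC_bilinear:
  fixes h1 :: "'v::euclidean_space \<Rightarrow> 's::topological_space \<Rightarrow> 'a::euclidean_space"
    and h2 :: "'v \<Rightarrow> 's \<Rightarrow> 'b::euclidean_space" and prod :: "'a \<Rightarrow> 'b \<Rightarrow> 'c::euclidean_space"
  assumes prod: "bounded_bilinear prod" and U: "open U"
  shows "relC (enat n) U h1 \<Longrightarrow> relC (enat n) U h2 \<Longrightarrow> relC (enat n) U (\<lambda>q s. prod (h1 q s) (h2 q s))"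
proof (induction n arbitrary: h1 h2)
  case 0
  then show ?case by (simp add: relC_0_iff case_prod_unfold bounded_bilinear.continuous_on[OF prod])
next
  case (Suc n)
  then have D1: "\<And>q s. (q, s) \<in> U \<Longrightarrow>
      ((\<lambda>x. h1 x s) has_derivative frechet_derivative (\<lambda>x. h1 x s) (at q)) (at q)"
    and D2: "\<And>q s. (q, s) \<in> U \<Longrightarrow>
      ((\<lambda>x. h2 x s) has_derivative frechet_derivative (\<lambda>x. h2 x s) (at q)) (at q)"
    by (simp_all add: relC_Suc_iff frechet_derivative_works)
  have deriv: "((\<lambda>x. prod (h1 x s) (h2 x s)) has_derivative
      (\<lambda>v. prod (h1 q s) (frechet_derivative (\<lambda>x. h2 x s) (at q) v) +
           prod (frechet_derivative (\<lambda>x. h1 x s) (at q) v) (h2 q s))) (at q)"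
    if "(q, s) \<in> U" for q s
    using bounded_bilinear.FDERIV[OF prod D1 D2, OF that that] .
  have h1: "relC (enat n) U h1"
    using Suc.prems(1) by (rule relC_SucD)
  have h2: "relC (enat n) U h2"
    using Suc.prems(2) by (rule relC_SucD)
  have Dh1: "relC (enat n) U (\<lambda>q s. frechet_derivative (\<lambda>x. h1 x s) (at q) v)"
    and Dh2: "relC (enat n) U (\<lambda>q s. frechet_derivative (\<lambda>x. h2 x s) (at q) v)" for v
    using Suc.prems by (simp_all add: relC_Suc_iff)
  show ?case
    unfolding relC_Suc_iff
  proof (intro conjI allI impI)
    show "continuous_on U (\<lambda>(q, s). prod (h1 q s) (h2 q s))"
      using relC_mono[OF Suc.IH[OF h1 h2], of "enat 0"] by (simp add: relC_0_iff)
  next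
    show "(\<lambda>x. prod (h1 x s) (h2 x s)) differentiable (at q)" if "(q, s) \<in> U" for q s
      using deriv[OF that] by (rule differentiableI)
  next
    fix v
    show "relC (enat n) U (\<lambda>q s. frechet_derivative (\<lambda>x. prod (h1 x s) (h2 x s)) (at q) v)"
      by (rule relC_cong[OF U _ relC_add[OF U Suc.IH[OF h1 Dh2] Suc.IH[OF Dh1 h2]]])
        (simp add: frechet_derivative_apply[OF deriv])
  qed
qed

lemma relC_sum:
  assumes "open U" "finite I" "\<And>i. i \<in> I \<Longrightarrow> relC (enat n) U (h i)"
  shows "relC (enat n) U (\<lambda>q s. \<Sum>i\<in>I. h i q s)"
  using assms(2,3) by (induction I rule: finite_induct) (simp_all add: relC_const relC_add[OF assms(1)])

lemma relC_linear_apply: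
  assumes U: "open U" and L: "\<And>q s. (q, s) \<in> U \<Longrightarrow> linear (L q s)"
    and columns: "\<And>b. b \<in> Basis \<Longrightarrow> relC (enat n) U (\<lambda>q s. L q s b)"
    and y: "relC (enat n) U y"
  shows "relC (enat n) U (\<lambda>q s. L q s (y q s))"
proof (rule relC_cong[OF U])
  show "relC (enat n) U (\<lambda>q s. \<Sum>b\<in>Basis. (y q s \<bullet> b) *\<^sub>R L q s b)"
    by (intro relC_sum[OF U finite_Basis] relC_bilinear[OF bounded_bilinear_scaleR U]
        relC_bilinear[OF bounded_bilinear_inner U y relC_const] columns)
  show "(\<Sum>b\<in>Basis. (y q s \<bullet> b) *\<^sub>R L q s b) = L q s (y q s)" if "(q, s) \<in> U" for q s
    using linear_euclidean_representation[OF L[OF that]] by (rule sym)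
qed

lemma relC_compose:
  assumes U: "open U" and U': "open U'" and g_maps: "\<And>w s. (w, s) \<in> U' \<Longrightarrow> (g w s, s) \<in> U"
  shows "relC (enat n) U \<phi> \<Longrightarrow> relC (enat n) U' g \<Longrightarrow> relC (enat n) U' (\<lambda>w s. \<phi> (g w s) s)"
proof (induction n arbitrary: \<phi>)
  case 0
  have "continuous_on U' (\<lambda>p. (g (fst p) (snd p), snd p))"
    using 0 by (simp add: relC_0_iff case_prod_unfold continuous_on_Pair continuous_on_snd)
  from continuous_on_compose2[OF _ this] 0 g_maps show ?case
    by (fastforce simp: relC_0_iff case_prod_unfold)
next
  case (Suc n)
  from Suc.prems have D\<phi>: "\<And>q s. (q, s) \<in> U \<Longrightarrow>
      ((\<lambda>x. \<phi> x s) has_derivative frechet_derivative (\<lambda>x. \<phi> x s) (at q)) (at q)"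
    and Dg: "\<And>w s. (w, s) \<in> U' \<Longrightarrow>
      ((\<lambda>x. g x s) has_derivative frechet_derivative (\<lambda>x. g x s) (at w)) (at w)"
    by (simp_all add: relC_Suc_iff frechet_derivative_works)
  have chain: "frechet_derivative (\<lambda>x. \<phi> (g x s) s) (at w) u =
      frechet_derivative (\<lambda>x. \<phi> x s) (at (g w s)) (frechet_derivative (\<lambda>x. g x s) (at w) u)"
    if "(w, s) \<in> U'" for w s u
    using frechet_derivative_apply[OF diff_chain_at[OF Dg[OF that] D\<phi>[OF g_maps[OF that]]]]
    by (simp add: o_def)
  have \<phi>: "relC (enat n) U \<phi>"
    using Suc.prems(1) by (rule relC_SucD)
  have g: "relC (enat n) U' g"
    using Suc.prems(2) by (rule relC_SucD)
  have D\<phi>_relC: "relC (enat n) U (\<lambda>q s. frechet_derivative (\<lambda>x. \<phi> x s) (at q) v)"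
    and Dg_relC: "relC (enat n) U' (\<lambda>w s. frechet_derivative (\<lambda>x. g x s) (at w) u)" for v u
    using Suc.prems by (simp_all add: relC_Suc_iff)
  have chain_relC: "relC (enat n) U'
      (\<lambda>w s. frechet_derivative (\<lambda>x. \<phi> x s) (at (g w s)) (frechet_derivative (\<lambda>x. g x s) (at w) u))" for u
  proof (rule relC_linear_apply[OF U', where L = "\<lambda>w s. frechet_derivative (\<lambda>x. \<phi> x s) (at (g w s))"])
    show "linear (frechet_derivative (\<lambda>x. \<phi> x s) (at (g w s)))" if "(w, s) \<in> U'" for w s
      using D\<phi>[OF g_maps[OF that]] by (rule has_derivative_linear)
    show "relC (enat n) U' (\<lambda>w s. frechet_derivative (\<lambda>x. \<phi> x s) (at (g w s)) b)" if "b \<in> Basis" for b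
      using Suc.IH[OF D\<phi>_relC g] .
    show "relC (enat n) U' (\<lambda>w s. frechet_derivative (\<lambda>x. g x s) (at w) u)"
      by (rule Dg_relC)
  qed
  have derivative: "relC (enat n) U' (\<lambda>w s. frechet_derivative (\<lambda>x. \<phi> (g x s) s) (at w) u)" for u
    by (rule relC_cong[OF U' _ chain_relC]) (simp add: chain)
  have continuous: "continuous_on U' (\<lambda>(w, s). \<phi> (g w s) s)"
    using relC_mono[OF Suc.IH[OF \<phi> g], of "enat 0"] by (simp add: relC_0_iff)
  have differentiable: "(\<lambda>x. \<phi> (g x s) s) differentiable (at w)" if "(w, s) \<in> U'" for w s
    using diff_chain_at[OF Dg[OF that] D\<phi>[OF g_maps[OF that]]] unfolding o_def by (rule differentiableI)
  show ?case
    using continuous differentiable derivative by (simp add: relC_Suc_iff)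
qed

section \<open>Inverting a continuously varying linear map\<close>

lemma bij_linear_perturbation:
  fixes A M :: "'v::euclidean_space \<Rightarrow> 'w::euclidean_space"
  assumes A: "linear A" "bij A" and K: "K > 0" "\<And>z. norm (inv A z) \<le> K * norm z"
    and M: "linear M" "\<And>y. norm (M y - A y) \<le> norm y / (2 * K)"
  shows "bij M"
proof -
  have inv_A: "linear (inv A)" "\<And>y. inv A (A y) = y" "\<And>z. A (inv A z) = z"
    using linear_inv[OF A] A(2) by (simp_all add: bij_is_inj bij_is_surj surj_f_inv_f)
  have "inj M"
    unfolding linear_inj_iff_eq_0[OF M(1)]
  proof (intro allI impI)
    fix y assume "M y = 0"
    then have "norm y \<le> K * norm (M y - A y)"
      using K(2)[of "A y"] inv_A(2) by simp
    also have "\<dots> \<le> K * (norm y / (2 * K))"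
      using mult_left_mono[OF M(2), of K] K(1) by simp
    finally show "y = 0"
      using K(1) by simp
  qed
  then have "inj (inv A \<circ> M)"
    using A(2) by (simp add: inj_compose bij_imp_bij_inv bij_is_inj)
  then have "surj (inv A \<circ> M)"
    by (rule linear_injective_imp_surjective[OF linear_compose[OF M(1) inv_A(1)]]) simp
  have "surj M"
    unfolding surj_def
  proof
    fix z
    obtain x where "inv A z = inv A (M x)"
      using surjD[OF \<open>surj (inv A \<circ> M)\<close>] by auto
    then have "A (inv A z) = A (inv A (M x))"
      by simp
    then show "\<exists>x. z = M x"
      using inv_A(3) by auto
  qed
  with \<open>inj M\<close> show ?thesis
    by (rule bijI)
qed

lemma norm_inv_perturbation_le:
  fixes A M :: "'v::euclidean_space \<Rightarrow> 'w::euclidean_space"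
  assumes A: "linear A" "bij A" and K: "K > 0" "\<And>z. norm (inv A z) \<le> K * norm z"
    and M: "linear M" "bij M" and small: "K * (\<Sum>b\<in>Basis. norm (M b - A b)) \<le> 1 / 2"
  shows "norm (inv M u - inv A u) \<le> 2 * K * norm (inv A u) * (\<Sum>b\<in>Basis. norm (M b - A b))"
proof -
  define D where "D = (\<Sum>b\<in>Basis. norm (M b - A b))"
  define y where "y = inv M u"
  have "M y = u"
    unfolding y_def using M(2) by (simp add: bij_is_surj surj_f_inv_f)
  then have "y - inv A u = inv A (A y - M y)"
    using A by (simp add: linear_diff[OF linear_inv[OF A]] bij_is_inj)
  then have "norm (y - inv A u) \<le> K * norm (M y - A y)"
    using K(2) by (metis norm_minus_commute)
  also have "\<dots> \<le> K * (D * norm y)"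
    using norm_linear_le_sum_Basis[OF linear_compose_sub[OF M(1) A(1)], of y] K(1)
    unfolding D_def by (simp add: mult_left_mono)
  finally have close: "norm (y - inv A u) \<le> K * D * norm y"
    by (simp add: mult.assoc)
  have "norm y \<le> norm (inv A u) + K * D * norm y"
    using close norm_triangle_sub[of y "inv A u"] by simp
  also have "\<dots> \<le> norm (inv A u) + 1 / 2 * norm y"
    using mult_right_mono[OF small norm_ge_zero[of y]] by (simp add: D_def)
  finally have "norm y \<le> 2 * norm (inv A u)"
    by simp
  then have "K * D * norm y \<le> K * D * (2 * norm (inv A u))"
    using K(1) by (simp add: D_def mult_left_mono sum_nonneg)
  with close show ?thesis
    unfolding y_def D_def by (simp add: algebra_simps)
qed

lemma tendsto_inv_linear:
  fixes L :: "'a \<Rightarrow> 'v::euclidean_space \<Rightarrow> 'w::euclidean_space"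
  assumes L0: "linear L0" "bij L0"
    and L: "\<forall>\<^sub>F x in F. linear (L x) \<and> bij (L x)"
    and columns: "\<And>b. b \<in> Basis \<Longrightarrow> ((\<lambda>x. L x b) \<longlongrightarrow> L0 b) F"
  shows "((\<lambda>x. inv (L x) u) \<longlongrightarrow> inv L0 u) F"
proof -
  obtain K where K: "K > 0" "\<And>z. norm (inv L0 z) \<le> K * norm z"
    using linear_bounded_pos[OF linear_inv[OF L0]] by blast
  define D where "D x = (\<Sum>b\<in>Basis. norm (L x b - L0 b))" for x
  have D: "(D \<longlongrightarrow> 0) F"
    unfolding D_def by (intro tendsto_null_sum tendsto_norm_zero LIM_zero columns)
  then have "\<forall>\<^sub>F x in F. D x < 1 / (2 * K)"
    using K(1) by (simp add: order_tendstoD(2))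
  with L have "\<forall>\<^sub>F x in F. norm (inv (L x) u - inv L0 u) \<le> 2 * K * norm (inv L0 u) * D x"
  proof eventually_elim
    case (elim x)
    then have "K * D x \<le> 1 / 2"
      using K(1) by (simp add: field_simps)
    with elim show ?case
      unfolding D_def by (intro norm_inv_perturbation_le[OF L0 K]) simp_all
  qed
  then have "((\<lambda>x. inv (L x) u - inv L0 u) \<longlongrightarrow> 0) F"
    by (rule Lim_null_comparison) (intro tendsto_mult_right_zero D)
  then show ?thesis
    by (rule LIM_zero_cancel)
qed

lemma has_derivative_scaleR_vanishing:
  fixes \<alpha> :: "'v::real_normed_vector \<Rightarrow> real" and \<beta> :: "'v \<Rightarrow> 'w::real_normed_vector"
  assumes \<alpha>: "continuous (at q) \<alpha>" and \<beta>: "(\<beta> has_derivative \<beta>') (at q)" and "\<beta> q = 0"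
  shows "((\<lambda>x. \<alpha> x *\<^sub>R \<beta> x) has_derivative (\<lambda>h. \<alpha> q *\<^sub>R \<beta>' h)) (at q)"
proof -
  have lin: "bounded_linear \<beta>'" using \<beta> by (rule has_derivative_bounded_linear)
  obtain B where B: "\<And>h. norm (\<beta>' h) \<le> B * norm h"
    using bounded_linear.pos_bounded[OF lin] by (auto simp: mult.commute)
  define r where "r y = norm ((\<beta> y - \<beta> q) - \<beta>' (y - q)) / norm (y - q)" for y
  have r: "(r \<longlongrightarrow> 0) (at q)"
    using \<beta> unfolding has_derivative_iff_norm r_def by blast
  have "((\<lambda>y. \<bar>\<alpha> y\<bar> * r y + \<bar>\<alpha> y - \<alpha> q\<bar> * B) \<longlongrightarrow> \<bar>\<alpha> q\<bar> * 0 + \<bar>\<alpha> q - \<alpha> q\<bar> * B) (at q)"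
    using \<alpha> r unfolding continuous_at by (intro tendsto_intros)
  then have bound_tendsto: "((\<lambda>y. \<bar>\<alpha> y\<bar> * r y + \<bar>\<alpha> y - \<alpha> q\<bar> * B) \<longlongrightarrow> 0) (at q)"
    by simp
  have "norm (\<alpha> y *\<^sub>R \<beta> y - \<alpha> q *\<^sub>R \<beta> q - \<alpha> q *\<^sub>R \<beta>' (y - q)) / norm (y - q)
      \<le> \<bar>\<alpha> y\<bar> * r y + \<bar>\<alpha> y - \<alpha> q\<bar> * B" for y
  proof (cases "y = q")
    case False
    have "\<alpha> y *\<^sub>R \<beta> y - \<alpha> q *\<^sub>R \<beta> q - \<alpha> q *\<^sub>R \<beta>' (y - q)
        = \<alpha> y *\<^sub>R ((\<beta> y - \<beta> q) - \<beta>' (y - q)) + (\<alpha> y - \<alpha> q) *\<^sub>R \<beta>' (y - q)"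
      using \<open>\<beta> q = 0\<close> by (simp add: algebra_simps)
    then have "norm (\<alpha> y *\<^sub>R \<beta> y - \<alpha> q *\<^sub>R \<beta> q - \<alpha> q *\<^sub>R \<beta>' (y - q))
        \<le> \<bar>\<alpha> y\<bar> * norm ((\<beta> y - \<beta> q) - \<beta>' (y - q)) + \<bar>\<alpha> y - \<alpha> q\<bar> * norm (\<beta>' (y - q))"
      by (metis norm_scaleR norm_triangle_ineq)
    also have "\<dots> \<le> \<bar>\<alpha> y\<bar> * norm ((\<beta> y - \<beta> q) - \<beta>' (y - q)) + \<bar>\<alpha> y - \<alpha> q\<bar> * (B * norm (y - q))"
      using B[of "y - q"] by (simp add: mult_left_mono)
    finally have "norm (\<alpha> y *\<^sub>R \<beta> y - \<alpha> q *\<^sub>R \<beta> q - \<alpha> q *\<^sub>R \<beta>' (y - q)) / norm (y - q)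
        \<le> (\<bar>\<alpha> y\<bar> * norm ((\<beta> y - \<beta> q) - \<beta>' (y - q)) + \<bar>\<alpha> y - \<alpha> q\<bar> * (B * norm (y - q))) / norm (y - q)"
      by (rule divide_right_mono) simp
    also have "\<dots> = \<bar>\<alpha> y\<bar> * r y + \<bar>\<alpha> y - \<alpha> q\<bar> * B"
      using False by (simp add: r_def field_simps)
    finally show ?thesis .
  qed (simp add: r_def)
  then have "((\<lambda>y. norm (\<alpha> y *\<^sub>R \<beta> y - \<alpha> q *\<^sub>R \<beta> q - \<alpha> q *\<^sub>R \<beta>' (y - q)) / norm (y - q)) \<longlongrightarrow> 0) (at q)"
    by (intro Lim_null_comparison[OF always_eventually bound_tendsto]) simp
  moreover have "bounded_linear (\<lambda>h. \<alpha> q *\<^sub>R \<beta>' h)"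
    using lin by (intro bounded_linear_intros)
  ultimately show ?thesis
    unfolding has_derivative_iff_norm by blast
qed

lemma has_derivative_inv_linear:
  fixes L :: "'v::euclidean_space \<Rightarrow> 'v \<Rightarrow> 'w::euclidean_space"
  assumes T: "open T" "q \<in> T"
    and L: "\<And>x. x \<in> T \<Longrightarrow> linear (L x) \<and> bij (L x)"
    and continuous: "continuous (at q) (\<lambda>x. inv (L x) u)"
    and columns: "\<And>b. b \<in> Basis \<Longrightarrow> ((\<lambda>x. L x b) has_derivative L' b) (at q)"
  shows "((\<lambda>x. inv (L x) u) has_derivative
           (\<lambda>h. - inv (L q) (\<Sum>b\<in>Basis. (inv (L q) u \<bullet> b) *\<^sub>R L' b h))) (at q)"
proof -
  define \<Phi> where "\<Phi> x = inv (L x) u" for x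
  have lin_inv: "linear (inv (L q))"
    using L[OF T(2)] linear_inv by blast
  \<comment> \<open>the resolvent identity, expanded in the coordinates of \<open>\<Phi> x\<close>
    so that only continuity of \<open>\<Phi>\<close> is needed\<close>
  have resolvent: "\<Phi> x = \<Phi> q + - inv (L q) (\<Sum>b\<in>Basis. (\<Phi> x \<bullet> b) *\<^sub>R (L x b - L q b))"
    if "x \<in> T" for x
  proof -
    have "(\<Sum>b\<in>Basis. (\<Phi> x \<bullet> b) *\<^sub>R (L x b - L q b)) = L x (\<Phi> x) - L q (\<Phi> x)"
      using linear_euclidean_representation[OF linear_compose_sub, of "L x" "L q" "\<Phi> x"] L that T(2)
      by simp
    also have "\<dots> = u - L q (\<Phi> x)"
      using L[OF that] by (simp add: \<Phi>_def bij_is_surj surj_f_inv_f)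
    finally show ?thesis
      using L[OF T(2)] by (simp add: linear_diff[OF lin_inv] \<Phi>_def bij_is_inj)
  qed
  have "((\<lambda>x. (\<Phi> x \<bullet> b) *\<^sub>R (L x b - L q b)) has_derivative (\<lambda>h. (\<Phi> q \<bullet> b) *\<^sub>R L' b h)) (at q)"
    if "b \<in> Basis" for b
    using has_derivative_scaleR_vanishing[of q "\<lambda>x. \<Phi> x \<bullet> b", OF _ has_derivative_diff[OF columns[OF that] has_derivative_const]]
      continuous unfolding \<Phi>_def by (simp add: continuous_intros)
  then have "((\<lambda>x. \<Phi> q + - inv (L q) (\<Sum>b\<in>Basis. (\<Phi> x \<bullet> b) *\<^sub>R (L x b - L q b))) has_derivative
      (\<lambda>h. 0 + - inv (L q) (\<Sum>b\<in>Basis. (\<Phi> q \<bullet> b) *\<^sub>R L' b h))) (at q)"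
    using lin_inv
    by (intro has_derivative_add has_derivative_const has_derivative_minus has_derivative_sum
        bounded_linear.has_derivative[of "inv (L q)"]) (simp_all add: linear_conv_bounded_linear)
  then have "(\<Phi> has_derivative (\<lambda>h. - inv (L q) (\<Sum>b\<in>Basis. (\<Phi> q \<bullet> b) *\<^sub>R L' b h))) (at q)"
    by (simp add: has_derivative_transform_within_open[OF _ T resolvent[symmetric]])
  then show ?thesis
    unfolding \<Phi>_def .
qed

lemma continuous_on_inv_derivative:
  assumes bij: "\<And>q s. (q, s) \<in> U \<Longrightarrow> bij (frechet_derivative (\<lambda>x. f x s) (at q))"
    and f: "relC (enat 1) U f"
  shows "continuous_on U (\<lambda>(q, s). inv (frechet_derivative (\<lambda>x. f x s) (at q)) u)"
proof -
  have lin: "linear (frechet_derivative (\<lambda>x. f x s) (at q))" if "(q, s) \<in> U" for q s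
    using f that by (simp add: relC_Suc_iff one_enat_def linear_frechet_derivative)
  have columns: "continuous_on U (\<lambda>p. frechet_derivative (\<lambda>x. f x (snd p)) (at (fst p)) b)" for b
    using f by (simp add: relC_Suc_iff one_enat_def relC_0_iff case_prod_unfold)
  show ?thesis
    unfolding continuous_on_def case_prod_unfold
  proof
    fix p assume "p \<in> U"
    show "((\<lambda>p. inv (frechet_derivative (\<lambda>x. f x (snd p)) (at (fst p))) u) \<longlongrightarrow>
        inv (frechet_derivative (\<lambda>x. f x (snd p)) (at (fst p))) u) (at p within U)"
    proof (rule tendsto_inv_linear)
      show "linear (frechet_derivative (\<lambda>x. f x (snd p)) (at (fst p)))"
        and "bij (frechet_derivative (\<lambda>x. f x (snd p)) (at (fst p)))"
        using lin bij \<open>p \<in> U\<close> by (cases p; simp)+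
      show "\<forall>\<^sub>F x in at p within U. linear (frechet_derivative (\<lambda>y. f y (snd x)) (at (fst x))) \<and>
          bij (frechet_derivative (\<lambda>y. f y (snd x)) (at (fst x)))"
        using lin bij unfolding eventually_at_filter by (simp add: case_prod_unfold)
      show "((\<lambda>x. frechet_derivative (\<lambda>y. f y (snd x)) (at (fst x)) b) \<longlongrightarrow>
          frechet_derivative (\<lambda>x. f x (snd p)) (at (fst p)) b) (at p within U)" for b
        using columns[of b] \<open>p \<in> U\<close> unfolding continuous_on_def by blast
    qed
  qed
qed

lemma has_derivative_inv_derivative:
  assumes U: "open U" and bij: "\<And>q s. (q, s) \<in> U \<Longrightarrow> bij (frechet_derivative (\<lambda>x. f x s) (at q))"
    and f: "relC (enat 2) U f" and qs: "(q, s) \<in> U"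
  shows "((\<lambda>x. inv (frechet_derivative (\<lambda>y. f y s) (at x)) u) has_derivative
      (\<lambda>h. - inv (frechet_derivative (\<lambda>y. f y s) (at q))
        (\<Sum>b\<in>Basis. (inv (frechet_derivative (\<lambda>y. f y s) (at q)) u \<bullet> b) *\<^sub>R
          frechet_derivative (\<lambda>x. frechet_derivative (\<lambda>y. f y s) (at x) b) (at q) h))) (at q)"
proof (rule has_derivative_inv_linear[OF open_slice[OF U]])
  have f2: "relC (enat (Suc (Suc 0))) U f"
    using f by (simp add: numeral_2_eq_2)
  show "q \<in> {x. (x, s) \<in> U}"
    using qs by simp
  show "linear (frechet_derivative (\<lambda>y. f y s) (at x)) \<and> bij (frechet_derivative (\<lambda>y. f y s) (at x))"
    if "x \<in> {x. (x, s) \<in> U}" for x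
    using f2 bij that by (simp add: relC_Suc_iff linear_frechet_derivative)
  have "relC (enat 1) U f"
    using f by (rule relC_mono) (simp add: one_enat_def numeral_eq_enat)
  from continuous_on_inv_derivative[OF bij this]
  show "continuous (at q) (\<lambda>x. inv (frechet_derivative (\<lambda>y. f y s) (at x)) u)"
    using U qs by (rule continuous_at_slice)
  show "((\<lambda>x. frechet_derivative (\<lambda>y. f y s) (at x) b) has_derivative
      frechet_derivative (\<lambda>x. frechet_derivative (\<lambda>y. f y s) (at x) b) (at q)) (at q)" for b
    using f2 qs by (simp add: relC_Suc_iff frechet_derivative_works)
qed

lemma relC_inv_derivative:
  assumes U: "open U" and bij: "\<And>q s. (q, s) \<in> U \<Longrightarrow> bij (frechet_derivative (\<lambda>x. f x s) (at q))"
  shows "relC (enat (Suc n)) U f \<Longrightarrow> relC (enat n) U (\<lambda>q s. inv (frechet_derivative (\<lambda>x. f x s) (at q)) u)"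
proof (induction n arbitrary: u)
  case 0
  then show ?case
    using continuous_on_inv_derivative[OF bij] by (simp add: relC_0_iff one_enat_def)
next
  case (Suc n)
  let ?L = "\<lambda>q s. frechet_derivative (\<lambda>x. f x s) (at q)"
  let ?L' = "\<lambda>q s b. frechet_derivative (\<lambda>y. ?L y s b) (at q)"
  have f: "relC (enat (Suc n)) U f"
    using Suc.prems by (rule relC_SucD)
  have f2: "relC (enat 2) U f"
    using Suc.prems by (rule relC_mono) (simp add: numeral_eq_enat)
  have lin_inv: "linear (inv (?L q s))" if "(q, s) \<in> U" for q s
    using Suc.prems that linear_inv[OF _ bij[OF that]] by (simp add: relC_Suc_iff linear_frechet_derivative)
  have second: "relC (enat n) U (\<lambda>q s. ?L' q s b v)" for b v
    using Suc.prems by (simp add: relC_Suc_iff)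
  have deriv: "((\<lambda>x. inv (?L x s) u) has_derivative
      (\<lambda>h. - inv (?L q s) (\<Sum>b\<in>Basis. (inv (?L q s) u \<bullet> b) *\<^sub>R ?L' q s b h))) (at q)"
    if "(q, s) \<in> U" for q s
    by (rule has_derivative_inv_derivative[OF U _ f2 that]) (simp add: bij)
  have expansion: "relC (enat n) U (\<lambda>q s. inv (?L q s) (\<Sum>b\<in>Basis. (inv (?L q s) u \<bullet> - b) *\<^sub>R ?L' q s b v))"
    for v
  proof (rule relC_linear_apply[OF U, where L = "\<lambda>q s. inv (?L q s)"])
    show "linear (inv (?L q s))" if "(q, s) \<in> U" for q s
      using lin_inv[OF that] .
    show "relC (enat n) U (\<lambda>q s. inv (?L q s) c)" if "c \<in> Basis" for c
      using Suc.IH[OF f] .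
    show "relC (enat n) U (\<lambda>q s. \<Sum>b\<in>Basis. (inv (?L q s) u \<bullet> - b) *\<^sub>R ?L' q s b v)"
      by (rule relC_sum[OF U finite_Basis], rule relC_bilinear[OF bounded_bilinear_scaleR U _ second],
          rule relC_bilinear[OF bounded_bilinear_inner U Suc.IH[OF f] relC_const])
  qed
  have derivative: "relC (enat n) U (\<lambda>q s. frechet_derivative (\<lambda>x. inv (?L x s) u) (at q) v)" for v
    by (rule relC_cong[OF U _ expansion])
      (simp add: frechet_derivative_apply[OF deriv] linear_neg[OF lin_inv] sum_negf)
  have "continuous_on U (\<lambda>(q, s). inv (?L q s) u)"
    using relC_mono[OF Suc.IH[OF f], of "enat 0"] by (simp add: relC_0_iff)
  moreover have "(\<lambda>x. inv (?L x s) u) differentiable (at q)" if "(q, s) \<in> U" for q s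
    using deriv[OF that] by (rule differentiableI)
  ultimately show ?case
    using derivative by (simp add: relC_Suc_iff)
qed

lemma relC_Suc_inverse:
  assumes U: "open U" and U': "open U'" and maps: "\<And>w s. (w, s) \<in> U' \<Longrightarrow> (g w s, s) \<in> U"
    and bij: "\<And>q s. (q, s) \<in> U \<Longrightarrow> bij (frechet_derivative (\<lambda>x. f x s) (at q))"
    and g_continuous: "continuous_on U' (\<lambda>(w, s). g w s)"
    and g_derivative: "\<And>w s. (w, s) \<in> U' \<Longrightarrow>
      ((\<lambda>x. g x s) has_derivative inv (frechet_derivative (\<lambda>x. f x s) (at (g w s)))) (at w)"
    and f: "relC (enat (Suc n)) U f"
  shows "relC (enat (Suc n)) U' g"
proof -
  have step: "relC (enat (Suc n)) U' g" if g_n: "relC (enat n) U' g" and f_Suc: "relC (enat (Suc n)) U f" for n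
  proof -
    have "relC (enat n) U' (\<lambda>w s. frechet_derivative (\<lambda>x. g x s) (at w) u)" for u
      by (rule relC_cong[OF U' _ relC_compose[OF U U' maps relC_inv_derivative[OF U bij f_Suc] g_n]])
        (simp add: frechet_derivative_apply[OF g_derivative])
    moreover have "(\<lambda>x. g x s) differentiable (at w)" if "(w, s) \<in> U'" for w s
      using g_derivative[OF that] by (rule differentiableI)
    ultimately show ?thesis
      using g_continuous by (simp add: relC_Suc_iff)
  qed
  show ?thesis
    using f
  proof (induction n)
    case 0
    then show ?case
      using g_continuous by (simp add: step relC_0_iff)
  next
    case (Suc n)
    then show ?case
      using relC_SucD by (blast intro: step)
  qed
qed

section \<open>Uniform local inversion\<close>

locale uniformly_near_linear =
  fixes f :: "'v::euclidean_space \<Rightarrow> 's::topological_space \<Rightarrow> 'w::euclidean_space"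
    and A :: "'v \<Rightarrow> 'w" and K :: real and \<delta> :: real and N :: "'s set"
  assumes linear_A: "linear A" and bij_A: "bij A"
    and K_pos: "0 < K" and norm_inv_A_le: "\<And>z. norm (inv A z) \<le> K * norm z"
    and open_N: "open N"
    and continuous_f: "continuous_on (ball 0 \<delta> \<times> N) (\<lambda>(q, s). f q s)"
    and differentiable_f: "\<And>q s. q \<in> ball 0 \<delta> \<Longrightarrow> s \<in> N \<Longrightarrow> (\<lambda>x. f x s) differentiable (at q)"
    and derivative_near_A: "\<And>q s y. q \<in> ball 0 \<delta> \<Longrightarrow> s \<in> N \<Longrightarrow>
      norm (frechet_derivative (\<lambda>x. f x s) (at q) y - A y) \<le> norm y / (2 * K)"
begin

definition source :: "('v \<times> 's) set" where
  "source = ball 0 \<delta> \<times> N"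

definition target :: "('w \<times> 's) set" where
  "target = (\<lambda>(q, s). (f q s, s)) ` source"

definition local_inv :: "'w \<Rightarrow> 's \<Rightarrow> 'v" where
  "local_inv w s = (SOME q. q \<in> ball 0 \<delta> \<and> f q s = w)"

lemma inv_A_cancel [simp]: "inv A (A y) = y" "A (inv A z) = z"
  using bij_A by (simp_all add: bij_is_inj bij_is_surj surj_f_inv_f)

lemma linear_inv_A: "linear (inv A)"
  using linear_inv[OF linear_A bij_A] .

lemma open_source: "open source"
  unfolding source_def using open_N by (simp add: open_Times)

lemma f_diff_near_A:
  assumes "s \<in> N" "q1 \<in> ball 0 \<delta>" "q2 \<in> ball 0 \<delta>"
  shows "norm (f q1 s - f q2 s - A (q1 - q2)) \<le> norm (q1 - q2) / (2 * K)"
proof -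
  have "norm ((f q1 s - A q1) - (f q2 s - A q2)) \<le> 1 / (2 * K) * norm (q1 - q2)"
  proof (rule differentiable_bound[where f' = "\<lambda>x y. frechet_derivative (\<lambda>z. f z s) (at x) y - A y"])
    fix x :: 'v assume x: "x \<in> ball 0 \<delta>"
    show "((\<lambda>x. f x s - A x) has_derivative (\<lambda>y. frechet_derivative (\<lambda>x. f x s) (at x) y - A y))
        (at x within ball 0 \<delta>)"
    proof (rule has_derivative_at_withinI, rule has_derivative_diff)
      show "((\<lambda>x. f x s) has_derivative frechet_derivative (\<lambda>x. f x s) (at x)) (at x)"
        using differentiable_f[OF x assms(1)] by (simp only: frechet_derivative_works)
      show "(A has_derivative A) (at x)"
        using linear_A by (simp only: linear_conv_bounded_linear bounded_linear_imp_has_derivative)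
    qed
    show "onorm (\<lambda>y. frechet_derivative (\<lambda>x. f x s) (at x) y - A y) \<le> 1 / (2 * K)"
      using derivative_near_A[OF x assms(1)] by (intro onorm_le) simp
  qed (use assms in auto)
  then show ?thesis
    by (simp add: linear_diff[OF linear_A] algebra_simps)
qed

lemma norm_diff_le_f_diff:
  assumes "s \<in> N" "q1 \<in> ball 0 \<delta>" "q2 \<in> ball 0 \<delta>"
  shows "norm (q1 - q2) \<le> 2 * K * norm (f q1 s - f q2 s)"
proof -
  have "norm (q1 - q2) \<le> K * norm (A (q1 - q2))"
    using norm_inv_A_le[of "A (q1 - q2)"] by simp
  also have "\<dots> \<le> K * (norm (f q1 s - f q2 s) + norm (q1 - q2) / (2 * K))"
  proof (rule mult_left_mono)
    have "norm (A (q1 - q2)) \<le> norm (f q1 s - f q2 s) + norm (f q1 s - f q2 s - A (q1 - q2))"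
      using norm_triangle_ineq4[of "f q1 s - f q2 s" "f q1 s - f q2 s - A (q1 - q2)"] by simp
    then show "norm (A (q1 - q2)) \<le> norm (f q1 s - f q2 s) + norm (q1 - q2) / (2 * K)"
      using f_diff_near_A[OF assms] by linarith
  qed (use K_pos in simp)
  also have "\<dots> = K * norm (f q1 s - f q2 s) + norm (q1 - q2) / 2"
    using K_pos by (simp add: field_simps)
  finally show ?thesis
    by simp
qed

lemma f_eq_imp_eq: "s \<in> N \<Longrightarrow> q1 \<in> ball 0 \<delta> \<Longrightarrow> q2 \<in> ball 0 \<delta> \<Longrightarrow> f q1 s = f q2 s \<Longrightarrow> q1 = q2"
  using norm_diff_le_f_diff[of s q1 q2] by simp

lemma newton_map_contraction:
  assumes "s \<in> N" "x \<in> ball 0 \<delta>" "y \<in> ball 0 \<delta>"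
  shows "dist (x - inv A (f x s - w)) (y - inv A (f y s - w)) \<le> 1 / 2 * dist x y"
proof -
  have "(x - inv A (f x s - w)) - (y - inv A (f y s - w)) = - inv A (f x s - f y s - A (x - y))"
    by (simp only: linear_diff[OF linear_inv_A] inv_A_cancel) (simp add: algebra_simps)
  then have "dist (x - inv A (f x s - w)) (y - inv A (f y s - w)) \<le> K * norm (f x s - f y s - A (x - y))"
    using norm_inv_A_le by (simp add: dist_norm)
  also have "\<dots> \<le> K * (norm (x - y) / (2 * K))"
    using mult_left_mono[OF f_diff_near_A[OF assms], of K] K_pos by simp
  finally show ?thesis
    using K_pos by (simp add: dist_norm)
qed

lemma f_solvable_in_cball:
  assumes s: "s \<in> N" and sub: "cball q0 \<rho> \<subseteq> ball 0 \<delta>" and w: "norm (w - f q0 s) \<le> \<rho> / (2 * K)"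
  shows "\<exists>q\<in>cball q0 \<rho>. f q s = w"
proof -
  define T where "T q = q - inv A (f q s - w)" for q
  have contraction: "dist (T x) (T y) \<le> 1 / 2 * dist x y" if "x \<in> cball q0 \<rho>" "y \<in> cball q0 \<rho>" for x y
    unfolding T_def using newton_map_contraction[OF s] that sub by blast
  have \<rho>: "0 \<le> \<rho>"
    using order_trans[OF norm_ge_zero w] K_pos by (simp add: zero_le_divide_iff)
  have "T ` cball q0 \<rho> \<subseteq> cball q0 \<rho>"
  proof (rule image_subsetI)
    fix q assume q: "q \<in> cball q0 \<rho>"
    have "dist q0 (T q0) \<le> K * norm (f q0 s - w)"
      using norm_inv_A_le by (simp add: T_def dist_norm)
    also have "\<dots> \<le> \<rho> / 2"
      using w K_pos mult_left_mono[OF w, of K] by (simp add: norm_minus_commute)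
    finally have "dist q0 (T q) \<le> \<rho> / 2 + 1 / 2 * dist q0 q"
      using contraction[of q0 q] q \<rho> dist_triangle[of q0 "T q" "T q0"] by simp
    then show "T q \<in> cball q0 \<rho>"
      using q by simp
  qed
  moreover have "complete (cball q0 \<rho>)" "cball q0 \<rho> \<noteq> {}"
    using \<rho> by (simp_all add: complete_eq_closed)
  ultimately obtain q where q: "q \<in> cball q0 \<rho>" "T q = q"
    using Banach_fix[of "cball q0 \<rho>" "1 / 2" T] contraction by auto
  then have "A (inv A (f q s - w)) = A 0"
    unfolding T_def by simp
  with q show ?thesis
    by (auto simp: linear_0[OF linear_A])
qed

lemma mem_target_iff: "(w, s) \<in> target \<longleftrightarrow> s \<in> N \<and> (\<exists>q\<in>ball 0 \<delta>. f q s = w)"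
  unfolding target_def source_def by force

lemma
  assumes "(w, s) \<in> target"
  shows local_inv_in_ball: "local_inv w s \<in> ball 0 \<delta>" and f_local_inv: "f (local_inv w s) s = w"
proof -
  have "\<exists>q. q \<in> ball 0 \<delta> \<and> f q s = w"
    using assms by (auto simp: mem_target_iff)
  then have "local_inv w s \<in> ball 0 \<delta> \<and> f (local_inv w s) s = w"
    unfolding local_inv_def by (rule someI_ex)
  then show "local_inv w s \<in> ball 0 \<delta>" and "f (local_inv w s) s = w"
    by simp_all
qed

lemma local_inv_f:
  assumes "q \<in> ball 0 \<delta>" "s \<in> N"
  shows "local_inv (f q s) s = q"
proof -
  have "(f q s, s) \<in> target"
    using assms by (auto simp: mem_target_iff)
  then show ?thesis
    using local_inv_in_ball f_local_inv f_eq_imp_eq assms by blast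
qed

lemma eventually_target:
  assumes "(q0, s0) \<in> source" "\<epsilon> > 0"
  shows "\<forall>\<^sub>F (w, s) in nhds (f q0 s0, s0). (w, s) \<in> target \<and> dist (local_inv w s) q0 \<le> \<epsilon>"
proof -
  define \<rho> where "\<rho> = min \<epsilon> ((\<delta> - norm q0) / 2)"
  have "norm q0 < \<delta>"
    using assms(1) by (simp add: source_def)
  then have \<rho>: "\<rho> > 0" "\<rho> \<le> \<epsilon>" and sub: "cball q0 \<rho> \<subseteq> ball 0 \<delta>"
    using assms(2) by (auto simp: \<rho>_def cball_subset_ball_iff dist_norm min_def field_simps)
  define r where "r = \<rho> / (4 * K)"
  have "r > 0"
    using \<rho> K_pos by (simp add: r_def)
  with continuous_f open_source assms(1)
  have "\<forall>\<^sub>F s in nhds s0. (q0, s) \<in> source \<and> dist (f q0 s) (f q0 s0) < r"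
    unfolding source_def by (rule eventually_dist_slice)
  moreover have "\<forall>\<^sub>F w in nhds (f q0 s0). dist w (f q0 s0) < r"
    unfolding eventually_nhds_metric using \<open>r > 0\<close> by blast
  ultimately have "\<forall>\<^sub>F (w, s) in nhds (f q0 s0) \<times>\<^sub>F nhds s0.
      dist w (f q0 s0) < r \<and> (q0, s) \<in> source \<and> dist (f q0 s) (f q0 s0) < r"
    using eventually_prodI by (fastforce simp: case_prod_unfold)
  then show ?thesis
    unfolding nhds_prod[symmetric]
  proof (rule eventually_mono, clarify)
    fix w s assume w: "dist w (f q0 s0) < r" and s: "(q0, s) \<in> source" "dist (f q0 s) (f q0 s0) < r"
    have "norm (w - f q0 s) < 2 * r"
      using w s(2) dist_triangle2[of w "f q0 s" "f q0 s0"] by (simp add: dist_norm)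
    then obtain q where q: "q \<in> cball q0 \<rho>" "f q s = w"
      using f_solvable_in_cball[of s q0 \<rho> w] s(1) sub by (fastforce simp: source_def r_def)
    with sub s(1) have "(w, s) \<in> target" "local_inv w s = q"
      using local_inv_f[of q s] by (auto simp: mem_target_iff source_def)
    with q \<rho>(2) show "(w, s) \<in> target \<and> dist (local_inv w s) q0 \<le> \<epsilon>"
      by (simp add: dist_commute)
  qed
qed

lemma targetE:
  assumes "p \<in> target"
  obtains q s where "(q, s) \<in> source" "p = (f q s, s)" "local_inv (f q s) s = q"
  using assms local_inv_f unfolding target_def source_def by auto

lemma open_target: "open target"
proof (rule open_subopen[THEN iffD2], rule ballI)
  fix p assume "p \<in> target"
  then obtain q s where qs: "(q, s) \<in> source" "p = (f q s, s)"
    by (rule targetE)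
  have "\<forall>\<^sub>F p' in nhds p. p' \<in> target"
    using eventually_target[OF qs(1) zero_less_one] unfolding qs(2)
    by (rule eventually_mono) (simp add: split_paired_all)
  then show "\<exists>T. open T \<and> p \<in> T \<and> T \<subseteq> target"
    unfolding eventually_nhds by blast
qed

lemma continuous_on_local_inv: "continuous_on target (\<lambda>(w, s). local_inv w s)"
  unfolding continuous_on_def
proof
  fix p assume "p \<in> target"
  then obtain q s where qs: "(q, s) \<in> source" "p = (f q s, s)" "local_inv (f q s) s = q"
    by (rule targetE)
  have "\<forall>\<^sub>F p' in at p within target. dist ((\<lambda>(w, s). local_inv w s) p') q < \<epsilon>" if "\<epsilon> > 0" for \<epsilon>
  proof -
    have "\<forall>\<^sub>F (w, s) in nhds p. (w, s) \<in> target \<and> dist (local_inv w s) q \<le> \<epsilon> / 2"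
      using eventually_target[OF qs(1), of "\<epsilon> / 2"] that unfolding qs(2) by simp
    then have "\<forall>\<^sub>F (w, s) in nhds p. dist (local_inv w s) q < \<epsilon>"
      by (rule eventually_mono) (use that in \<open>auto simp: split_paired_all\<close>)
    then show ?thesis
      unfolding eventually_at_filter by (rule eventually_mono) (simp add: case_prod_unfold)
  qed
  then show "((\<lambda>(w, s). local_inv w s) \<longlongrightarrow> (\<lambda>(w, s). local_inv w s) p) (at p within target)"
    using qs by (simp add: tendsto_iff)
qed

lemma bij_derivative:
  assumes "(q, s) \<in> source"
  shows "bij (frechet_derivative (\<lambda>x. f x s) (at q))"
proof -
  have q: "q \<in> ball 0 \<delta>" and s: "s \<in> N"
    using assms by (auto simp: source_def)
  show ?thesis
    using linear_A bij_A K_pos norm_inv_A_le linear_frechet_derivative[OF differentiable_f[OF q s]]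
      derivative_near_A[OF q s]
    by (rule bij_linear_perturbation)
qed

lemma has_derivative_local_inv:
  assumes "(w, s) \<in> target"
  shows "((\<lambda>x. local_inv x s) has_derivative inv (frechet_derivative (\<lambda>x. f x s) (at (local_inv w s)))) (at w)"
proof -
  let ?L = "frechet_derivative (\<lambda>x. f x s) (at (local_inv w s))"
  have source: "(local_inv w s, s) \<in> source"
    using assms local_inv_in_ball[OF assms] unfolding mem_target_iff source_def by simp
  then have diff: "(\<lambda>x. f x s) differentiable (at (local_inv w s))"
    unfolding source_def using differentiable_f by blast
  show ?thesis
  proof (rule has_derivative_inverse_basic[where T = "{x. (x, s) \<in> target}"])
    show "((\<lambda>x. f x s) has_derivative ?L) (at (local_inv w s))"
      using diff by (simp only: frechet_derivative_works)
    show "bounded_linear (inv ?L)"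
      using linear_inv[OF linear_frechet_derivative[OF diff] bij_derivative[OF source]]
      by (simp only: linear_conv_bounded_linear)
    show "inv ?L \<circ> ?L = id"
      using bij_derivative[OF source] by (simp add: bij_is_inj)
    show "continuous (at w) (\<lambda>x. local_inv x s)"
      using continuous_at_slice[OF continuous_on_local_inv open_target assms] .
    show "open {x. (x, s) \<in> target}"
      using open_slice[OF open_target] .
    show "f (local_inv z s) s = z" if "z \<in> {x. (x, s) \<in> target}" for z
      using f_local_inv that by simp
  qed (use assms in simp)
qed

lemma bij_betw_source_target: "bij_betw (\<lambda>(q, s). (f q s, s)) source target"
  unfolding bij_betw_def target_def
proof
  show "inj_on (\<lambda>(q, s). (f q s, s)) source"
  proof (rule inj_onI)
    fix p p' assume p: "p \<in> source" "p' \<in> source" "(\<lambda>(q, s). (f q s, s)) p = (\<lambda>(q, s). (f q s, s)) p'"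
    obtain q1 s1 q2 s2 where pq: "p = (q1, s1)" "p' = (q2, s2)"
      by (cases p, cases p')
    with p have "s1 \<in> N" "q1 \<in> ball 0 \<delta>" "q2 \<in> ball 0 \<delta>" "f q1 s1 = f q2 s1" "s1 = s2"
      by (auto simp: source_def)
    then show "p = p'"
      using f_eq_imp_eq pq by blast
  qed
qed simp

lemma relC_local_inv:
  assumes "relC r source f"
  shows "relC r target local_inv"
proof (rule relC_iff_relC_enat[THEN iffD2], intro allI impI)
  fix n assume "enat n \<le> r"
  then show "relC (enat n) target local_inv"
  proof (cases n)
    case 0
    then show ?thesis
      using continuous_on_local_inv by (simp add: relC_0_iff)
  next
    case (Suc m)
    show ?thesis
      unfolding Suc
    proof (rule relC_Suc_inverse[OF open_source open_target _ bij_derivative continuous_on_local_inv])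
      show "(local_inv w s, s) \<in> source" if "(w, s) \<in> target" for w s
        using that local_inv_in_ball by (auto simp: mem_target_iff source_def)
      show "relC (enat (Suc m)) source f"
        using assms \<open>enat n \<le> r\<close> unfolding Suc by (rule relC_mono)
    qed (simp_all add: has_derivative_local_inv)
  qed
qed

end

lemma eventually_derivative_near:
  fixes f :: "'v::euclidean_space \<Rightarrow> 's::topological_space \<Rightarrow> 'w::euclidean_space"
  assumes U: "open U" "(q0, t) \<in> U" and f: "relC (enat 1) U f" and "c > 0"
  shows "\<forall>\<^sub>F (q, s) in nhds (q0, t). (q, s) \<in> U \<and>
    (\<forall>y. norm (frechet_derivative (\<lambda>x. f x s) (at q) y - frechet_derivative (\<lambda>x. f x t) (at q0) y) \<le> c * norm y)"
proof -
  let ?L = "\<lambda>q s. frechet_derivative (\<lambda>x. f x s) (at q)"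
  define D where "D p = (\<Sum>b\<in>Basis. norm (?L (fst p) (snd p) b - ?L q0 t b))" for p
  have lin: "linear (?L q s)" if "(q, s) \<in> U" for q s
    using f that by (simp add: relC_Suc_iff one_enat_def linear_frechet_derivative)
  have "((\<lambda>p. ?L (fst p) (snd p) b) \<longlongrightarrow> ?L q0 t b) (at (q0, t))" for b
  proof -
    have "continuous_on U (\<lambda>p. ?L (fst p) (snd p) b)"
      using f by (simp add: relC_Suc_iff one_enat_def relC_0_iff case_prod_unfold)
    then have "((\<lambda>p. ?L (fst p) (snd p) b) \<longlongrightarrow> ?L (fst (q0, t)) (snd (q0, t)) b) (at (q0, t) within U)"
      using U(2) unfolding continuous_on_def by blast
    then show ?thesis
      by (simp add: at_within_open[OF U(2) U(1)])
  qed
  then have "(D \<longlongrightarrow> 0) (at (q0, t))"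
    unfolding D_def by (intro tendsto_null_sum tendsto_norm_zero LIM_zero)
  then have "\<forall>\<^sub>F p in at (q0, t). D p < c"
    using \<open>c > 0\<close> by (rule order_tendstoD(2))
  moreover have "D (q0, t) < c"
    using \<open>c > 0\<close> by (simp add: D_def)
  ultimately have "\<forall>\<^sub>F p in nhds (q0, t). D p < c"
    by (simp add: eventually_nhds_conv_at)
  with eventually_nhds_in_open[OF U]
  have "\<forall>\<^sub>F p in nhds (q0, t). p \<in> U \<and> (\<forall>y. norm (?L (fst p) (snd p) y - ?L q0 t y) \<le> c * norm y)"
  proof eventually_elim
    case (elim p)
    have "norm (?L (fst p) (snd p) y - ?L q0 t y) \<le> c * norm y" for y
      using norm_linear_le_sum_Basis[OF linear_compose_sub[OF lin lin], of "fst p" "snd p" q0 t y]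
        mult_right_mono[of "D p" c "norm y"] elim U(2) by (simp add: D_def)
    with elim show ?case
      by blast
  qed
  then show ?thesis
    by (simp add: case_prod_unfold)
qed

lemma obtain_uniformly_near_linear:
  fixes f :: "'v::euclidean_space \<Rightarrow> 's::topological_space \<Rightarrow> 'w::euclidean_space"
  assumes U: "open U" "(0, t) \<in> U" and f: "relC 1 U f"
    and bij: "bij (frechet_derivative (\<lambda>q. f q t) (at 0))"
  obtains K \<delta> N where "uniformly_near_linear f (frechet_derivative (\<lambda>q. f q t) (at 0)) K \<delta> N"
    and "0 < \<delta>" "t \<in> N" "ball 0 \<delta> \<times> N \<subseteq> U"
proof -
  let ?A = "frechet_derivative (\<lambda>q. f q t) (at 0)"
  have f1: "relC (enat (Suc 0)) U f"
    using f by (simp add: one_enat_def)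
  have lin: "linear ?A"
    using f1 U(2) by (simp add: relC_Suc_iff linear_frechet_derivative)
  obtain K where K: "K > 0" "\<And>z. norm (inv ?A z) \<le> K * norm z"
    using linear_bounded_pos[OF linear_inv[OF lin bij]] by blast
  have "1 / (2 * K) > 0"
    using K(1) by simp
  from eventually_derivative_near[OF U _ this] f
  have "\<forall>\<^sub>F (q, s) in nhds (0, t). (q, s) \<in> U \<and>
      (\<forall>y. norm (frechet_derivative (\<lambda>x. f x s) (at q) y - ?A y) \<le> 1 / (2 * K) * norm y)"
    by (simp add: one_enat_def)
  then obtain S where S: "open S" "(0, t) \<in> S"
    and near: "\<forall>(q, s)\<in>S. (q, s) \<in> U \<and>
      (\<forall>y. norm (frechet_derivative (\<lambda>x. f x s) (at q) y - ?A y) \<le> 1 / (2 * K) * norm y)"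
    unfolding eventually_nhds by blast
  obtain B N where BN: "open B" "open N" "(0, t) \<in> B \<times> N" "B \<times> N \<subseteq> S"
    using open_prod_elim[OF S] by blast
  obtain \<delta> where \<delta>: "\<delta> > 0" "ball 0 \<delta> \<subseteq> B"
    using BN(1,3) open_contains_ball by blast
  have near': "(q, s) \<in> U \<and> (\<forall>y. norm (frechet_derivative (\<lambda>x. f x s) (at q) y - ?A y) \<le> 1 / (2 * K) * norm y)"
    if "q \<in> ball 0 \<delta>" "s \<in> N" for q s
  proof -
    have "(q, s) \<in> S"
      using \<delta>(2) BN(4) that by auto
    from bspec[OF near this] show ?thesis
      by simp
  qed
  then have subU: "ball 0 \<delta> \<times> N \<subseteq> U"
    by auto
  have "uniformly_near_linear f ?A K \<delta> N"
  proof (rule uniformly_near_linear.intro[OF lin bij K BN(2)])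
    show "continuous_on (ball 0 \<delta> \<times> N) (\<lambda>(q, s). f q s)"
      using f1 subU unfolding relC_Suc_iff by (blast intro: continuous_on_subset)
    show "(\<lambda>x. f x s) differentiable (at q)" if "q \<in> ball 0 \<delta>" "s \<in> N" for q s
      using f1 subU that unfolding relC_Suc_iff by blast
    show "norm (frechet_derivative (\<lambda>x. f x s) (at q) y - ?A y) \<le> norm y / (2 * K)"
      if "q \<in> ball 0 \<delta>" "s \<in> N" for q s y
      using near'[OF that] by simp
  qed
  with \<delta> BN subU show ?thesis
    using that by blast
qed

theorem lemma5p10:
  fixes f :: "'v::euclidean_space \<Rightarrow> 's::topological_space \<Rightarrow> 'w::euclidean_space"
    and t :: 's and \<U> :: "('v \<times> 's) set"
  assumes "open \<U>" and "(0, t) \<in> \<U>"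
    and "relC 1 \<U> f"
    and "f 0 t = 0"
    and "bij (frechet_derivative (\<lambda>q. f q t) (at 0))"
  shows "\<exists>U U' g. open U \<and> U \<subseteq> \<U> \<and> (0, t) \<in> U \<and> open U' \<and> (0, t) \<in> U' \<and>
           bij_betw (\<lambda>(q, s). (f q s, s)) U U' \<and>
           (\<forall>w s. (w, s) \<in> U' \<longrightarrow> (g w s, s) \<in> U \<and> f (g w s) s = w) \<and>
           relC 1 U' g \<and>
           (\<forall>r. 2 \<le> r \<longrightarrow> relC r \<U> f \<longrightarrow> relC r U' g)"
proof -
  obtain K \<delta> N where near: "uniformly_near_linear f (frechet_derivative (\<lambda>q. f q t) (at 0)) K \<delta> N"
    and "0 < \<delta>" "t \<in> N" "ball 0 \<delta> \<times> N \<subseteq> \<U>"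
    using obtain_uniformly_near_linear[OF assms(1-3,5)] .
  interpret uniformly_near_linear f "frechet_derivative (\<lambda>q. f q t) (at 0)" K \<delta> N
    by (rule near)
  have source: "source \<subseteq> \<U>" "(0, t) \<in> source"
    using \<open>0 < \<delta>\<close> \<open>t \<in> N\<close> \<open>ball 0 \<delta> \<times> N \<subseteq> \<U>\<close> by (simp_all add: source_def)
  then have "(0, t) \<in> target"
    using assms(4) unfolding target_def by force
  moreover have "(local_inv w s, s) \<in> source \<and> f (local_inv w s) s = w" if "(w, s) \<in> target" for w s
    using local_inv_in_ball[OF that] f_local_inv[OF that] that by (simp add: mem_target_iff source_def)
  moreover have "relC r target local_inv" if "relC r \<U> f" for r
    using relC_local_inv relC_subset[OF that source(1)] by blast
  ultimately show ?thesis
    using source open_source open_target bij_betw_source_target assms(3)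
    by (intro exI[of _ source] exI[of _ target] exI[of _ local_inv]) blast
qed

end
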